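(* Let $A$ and $G$ be $n\times n$ symmetric positive definite matrices with $A\preceq G$, and let $u\in\mathbb{R}^n$ satisfy $u^\top(G-A)u>0$. Then $\mathrm{rank}(\mathrm{SR1}(A,G,u)-A)=\mathrm{rank}(G-A)-1$ and $\kappa(\mathrm{SR1}(A,G,u)-A)\le\kappa(G-A)$.
   Context: For a positive semidefinite matrix $B$, $\kappa(B)=\lambda_{\max}(B)/\lambda_{\min}(B)$, where $\lambda_{\min}(B)$ is the smallest nonzero eigenvalue of $B$. $\mathrm{SR1}(A,G,u)=G$ if $(G-A)u=0$, and otherwise $\mathrm{SR1}(A,G,u)=G-\frac{(G-A)uu^\top(G-A)}{u^\top(G-A)u}$. *)

theory Defs
  imports "HOL-Analysis.Analysis"
begin

definition sym_mat :: "real^'n^'n \<Rightarrow> bool" where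
  "sym_mat A \<longleftrightarrow> transpose A = A"

definition pos_def :: "real^'n^'n \<Rightarrow> bool" where
  "pos_def A \<longleftrightarrow> sym_mat A \<and> (\<forall>x. x \<noteq> 0 \<longrightarrow> x \<bullet> (A *v x) > 0)"

definition pos_semidef :: "real^'n^'n \<Rightarrow> bool" where
  "pos_semidef A \<longleftrightarrow> sym_mat A \<and> (\<forall>x. x \<bullet> (A *v x) \<ge> 0)"

definition loewner_le :: "real^'n^'n \<Rightarrow> real^'n^'n \<Rightarrow> bool" where
  "loewner_le A G \<longleftrightarrow> pos_semidef (G - A)"

definition outer :: "real^'n \<Rightarrow> real^'n \<Rightarrow> real^'n^'n" where
  "outer u v = (\<chi> i j. u $ i * v $ j)"

definition eigenvalues :: "real^'n^'n \<Rightarrow> real set" where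
  "eigenvalues B = {c. \<exists>v. v \<noteq> 0 \<and> B *v v = c *s v}"

definition lambda_max :: "real^'n^'n \<Rightarrow> real" where
  "lambda_max B = Max (eigenvalues B)"

definition lambda_min :: "real^'n^'n \<Rightarrow> real" where
  "lambda_min B = Min (eigenvalues B - {0})"

definition kappa :: "real^'n^'n \<Rightarrow> real" where
  "kappa B = lambda_max B / lambda_min B"

definition SR1 :: "real^'n^'n \<Rightarrow> real^'n^'n \<Rightarrow> real^'n \<Rightarrow> real^'n^'n" where
  "SR1 A G u = (if (G - A) *v u = 0 then G
     else G - (1 / (u \<bullet> ((G - A) *v u))) *\<^sub>R ((G - A) ** outer u u ** (G - A)))"

end

theory Submission
  imports Defs
begin

(*
  With D = G - A and c = u'Du > 0, SR1(A,G,u) - A is the rank-one downdate E = D - (Du)(Du)'/c.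
  Cauchy-Schwarz for the semidefinite form of D gives 0 <= E <= D in the Loewner order, hence
  lambda_max E <= lambda_max D.  As E is symmetric with Eu = 0, its range is orthogonal to u and
  so misses Du, while together with Du it spans range D: the rank drops by exactly one.  An
  eigenvector v of E for a nonzero eigenvalue lies in range D and is orthogonal to u; Cauchy-Schwarz
  for D - lambda_min(D) I, which is semidefinite on range D, applied to v and the component of u in
  range D bounds the eigenvalue below by lambda_min D.
*)

lemma sym_mat_iff_inner:
  "sym_mat M \<longleftrightarrow> (\<forall>x y. x \<bullet> (M *v y) = (M *v x) \<bullet> y)"
proof
  assume "sym_mat M"
  then show "\<forall>x y. x \<bullet> (M *v y) = (M *v x) \<bullet> y"
    unfolding sym_mat_def by (metis dot_lmul_matrix vector_transpose_matrix inner_commute)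
next
  assume self_adjoint: "\<forall>x y. x \<bullet> (M *v y) = (M *v x) \<bullet> y"
  have "transpose M *v y = M *v y" for y
    using self_adjoint by (metis dot_lmul_matrix transpose_matrix_vector vector_eq_rdot)
  then show "sym_mat M"
    unfolding sym_mat_def by (simp add: matrix_eq)
qed

lemma sym_mat_inner: "sym_mat M \<Longrightarrow> x \<bullet> (M *v y) = (M *v x) \<bullet> y"
  by (simp add: sym_mat_iff_inner)

lemma sym_mat_diff: "sym_mat M \<Longrightarrow> sym_mat N \<Longrightarrow> sym_mat (M - N)"
  by (simp add: sym_mat_iff_inner matrix_vector_mult_diff_rdistrib inner_diff_left inner_diff_right)

lemma uminus_matrix_vector_mult:
  fixes M :: "real^'n^'m"
  shows "(- M) *v x = - (M *v x)"
  by (simp add: matrix_vector_mult_def vec_eq_iff sum_negf)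

lemma sym_mat_uminus: "sym_mat M \<Longrightarrow> sym_mat (- M)"
  by (simp add: sym_mat_iff_inner uminus_matrix_vector_mult)

lemma pos_semidefD:
  assumes "pos_semidef M"
  shows "sym_mat M" and "0 \<le> x \<bullet> (M *v x)"
  using assms unfolding pos_semidef_def by simp_all

lemma matrix_vector_mult_shift:
  fixes M :: "real^'n^'n"
  shows "(M - m *\<^sub>R mat 1) *v x = M *v x - m *\<^sub>R x"
  using scaleR_matrix_vector_assoc[of m "mat 1" x] by (simp add: matrix_vector_mult_diff_rdistrib)

lemma sym_mat_shift: "sym_mat M \<Longrightarrow> sym_mat (M - m *\<^sub>R mat 1)"
  by (simp add: sym_mat_iff_inner matrix_vector_mult_shift inner_diff_left inner_diff_right inner_commute)

lemma subspace_range_matrix: "subspace (range ((*v) (M :: real^'n^'m)))"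
  using matrix_vector_mul_linear subspace_UNIV by (rule linear_subspace_image)

lemma outer_mult: "outer u v *v y = (v \<bullet> y) *\<^sub>R (u :: real^'m)"
  by (simp add: outer_def matrix_vector_mult_def inner_vec_def vec_eq_iff sum_distrib_left sum_distrib_right mult_ac)

lemma mem_eigenvalues: "c \<in> eigenvalues M \<longleftrightarrow> (\<exists>v. v \<noteq> 0 \<and> M *v v = c *\<^sub>R v)"
  by (simp add: eigenvalues_def scalar_mult_eq_scaleR)

lemma nonneg_quadratic_discriminant:
  fixes a b c :: real
  assumes nonneg: "\<And>t. 0 \<le> a + 2 * b * t + c * t\<^sup>2" and "0 \<le> c"
  shows "b\<^sup>2 \<le> a * c"
proof (cases "c = 0")
  case True
  have "b = 0"
  proof (rule ccontr)
    assume "b \<noteq> 0"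
    then show False
      using nonneg[of "- (a + 1) / (2 * b)"] True by (simp add: field_simps)
  qed
  with True show ?thesis by simp
next
  case False
  with \<open>0 \<le> c\<close> have "0 < c" by simp
  have "0 \<le> a + 2 * b * (- b / c) + c * (- b / c)\<^sup>2" by (rule nonneg)
  also have "\<dots> = a - b\<^sup>2 / c" using \<open>0 < c\<close> by (simp add: field_simps power2_eq_square)
  finally show ?thesis using \<open>0 < c\<close> by (simp add: pos_divide_le_eq)
qed

lemma psd_on_subspace_cauchy_schwarz:
  fixes M :: "real^'n^'n"
  assumes "sym_mat M" and "subspace S" and psd: "\<And>z. z \<in> S \<Longrightarrow> 0 \<le> z \<bullet> (M *v z)"
    and "x \<in> S" and "y \<in> S"
  shows "(x \<bullet> (M *v y))\<^sup>2 \<le> (x \<bullet> (M *v x)) * (y \<bullet> (M *v y))"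
proof (rule nonneg_quadratic_discriminant)
  fix t :: real
  have "x + t *\<^sub>R y \<in> S" using assms by (simp add: subspace_add subspace_scale)
  then have "0 \<le> (x + t *\<^sub>R y) \<bullet> (M *v (x + t *\<^sub>R y))" by (rule psd)
  also have "\<dots> = x \<bullet> (M *v x) + 2 * (x \<bullet> (M *v y)) * t + (y \<bullet> (M *v y)) * t\<^sup>2"
    using sym_mat_inner[OF \<open>sym_mat M\<close>, of y x]
    by (simp add: matrix_vector_right_distrib matrix_vector_mult_scaleR inner_add_left
        inner_add_right power2_eq_square algebra_simps inner_commute)
  finally show "0 \<le> x \<bullet> (M *v x) + 2 * (x \<bullet> (M *v y)) * t + (y \<bullet> (M *v y)) * t\<^sup>2" .
  show "0 \<le> y \<bullet> (M *v y)" using psd \<open>y \<in> S\<close> .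
qed

lemma psd_on_subspace_mult_eq_0:
  fixes M :: "real^'n^'n"
  assumes "sym_mat M" and "subspace S" and "\<And>z. z \<in> S \<Longrightarrow> 0 \<le> z \<bullet> (M *v z)"
    and "x \<in> S" and "M *v x \<in> S" and "x \<bullet> (M *v x) = 0"
  shows "M *v x = 0"
proof -
  have "(x \<bullet> (M *v (M *v x)))\<^sup>2 \<le> 0"
    using psd_on_subspace_cauchy_schwarz[OF assms(1-5)] assms(6) by simp
  moreover have "x \<bullet> (M *v (M *v x)) = (M *v x) \<bullet> (M *v x)"
    using sym_mat_inner[OF assms(1)] .
  ultimately show ?thesis by simp
qed

lemma rayleigh_min_eigenpair:
  fixes M :: "real^'n^'n"
  assumes "sym_mat M" and "subspace S" and invariant: "\<And>x. x \<in> S \<Longrightarrow> M *v x \<in> S"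
    and "S \<noteq> {0}"
  obtains x m where "x \<in> S" and "x \<noteq> 0" and "M *v x = m *\<^sub>R x"
    and "\<And>y. y \<in> S \<Longrightarrow> m * (y \<bullet> y) \<le> y \<bullet> (M *v y)"
proof -
  let ?U = "S \<inter> sphere 0 1"
  obtain w where "w \<in> S" "w \<noteq> 0" using \<open>S \<noteq> {0}\<close> \<open>subspace S\<close> subspace_0 by blast
  then have "(1 / norm w) *\<^sub>R w \<in> ?U" using \<open>subspace S\<close> by (simp add: subspace_scale)
  then have "?U \<noteq> {}" by blast
  moreover have "compact ?U"
    using \<open>subspace S\<close> by (simp add: closed_Int_compact closed_subspace)
  moreover have "continuous_on ?U (\<lambda>x. x \<bullet> (M *v x))"
    by (intro continuous_intros linear_continuous_on matrix_vector_mul_bounded_linear)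
  ultimately obtain x where x: "x \<in> ?U"
    and min: "\<And>y. y \<in> ?U \<Longrightarrow> x \<bullet> (M *v x) \<le> y \<bullet> (M *v y)"
    using continuous_attains_inf[of ?U "\<lambda>x. x \<bullet> (M *v x)"] by blast
  define m where "m = x \<bullet> (M *v x)"
  have bound: "m * (y \<bullet> y) \<le> y \<bullet> (M *v y)" if "y \<in> S" for y
  proof (cases "y = 0")
    case False
    then have "(1 / norm y) *\<^sub>R y \<in> ?U"
      using \<open>subspace S\<close> \<open>y \<in> S\<close> by (simp add: subspace_scale)
    then have "m \<le> (y \<bullet> (M *v y)) / (norm y)\<^sup>2"
      using min unfolding m_def by (fastforce simp: matrix_vector_mult_scaleR power2_eq_square)
    with False show ?thesis by (simp add: le_divide_eq dot_square_norm mult.commute)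
  qed simp
  let ?B = "M - m *\<^sub>R mat 1"
  have "?B *v x = 0"
  proof (rule psd_on_subspace_mult_eq_0[OF sym_mat_shift[OF \<open>sym_mat M\<close>] \<open>subspace S\<close>])
    show "0 \<le> z \<bullet> (?B *v z)" if "z \<in> S" for z
      using bound[OF that] by (simp add: matrix_vector_mult_shift inner_diff_right)
    show "x \<in> S" using x by simp
    then show "?B *v x \<in> S"
      using \<open>subspace S\<close> invariant by (simp add: matrix_vector_mult_shift subspace_diff subspace_scale)
    show "x \<bullet> (?B *v x) = 0"
      using x by (simp add: matrix_vector_mult_shift inner_diff_right m_def dot_square_norm)
  qed
  then have "M *v x = m *\<^sub>R x" by (simp add: matrix_vector_mult_shift)
  with x bound show thesis by (intro that) auto
qed

lemma eigenvector_orthogonal: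
  fixes M :: "real^'n^'n"
  assumes "sym_mat M" and "M *v v = a *\<^sub>R v" and "M *v w = b *\<^sub>R w" and "a \<noteq> b"
  shows "v \<bullet> w = 0"
proof -
  have "b * (v \<bullet> w) = a * (v \<bullet> w)"
    using sym_mat_inner[OF assms(1), of v w] assms(2,3) by simp
  with \<open>a \<noteq> b\<close> show ?thesis by simp
qed

lemma finite_eigenvalues:
  fixes M :: "real^'n^'n"
  assumes "sym_mat M"
  shows "finite (eigenvalues M)"
proof -
  obtain f where f: "\<And>c. c \<in> eigenvalues M \<Longrightarrow> f c \<noteq> 0 \<and> M *v f c = c *\<^sub>R f c"
    using mem_eigenvalues by metis
  have "inj_on f (eigenvalues M)"
    by (rule inj_onI) (metis f scaleR_cancel_right)
  moreover have "independent (f ` eigenvalues M)"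
  proof (rule pairwise_orthogonal_independent)
    show "pairwise orthogonal (f ` eigenvalues M)"
      unfolding pairwise_def orthogonal_def
      by (metis f eigenvector_orthogonal[OF assms] imageE)
    show "0 \<notin> f ` eigenvalues M" using f by force
  qed
  ultimately show ?thesis by (metis finiteI_independent finite_imageD)
qed

lemma pos_semidef_eigenvalue_nonneg:
  assumes "pos_semidef M" and "c \<in> eigenvalues M"
  shows "0 \<le> c"
proof -
  obtain v where "v \<noteq> 0" and "M *v v = c *\<^sub>R v" using assms(2) by (auto simp: mem_eigenvalues)
  then have "0 \<le> c * (v \<bullet> v)" and "0 < v \<bullet> v"
    using assms(1) unfolding pos_semidef_def by (metis inner_scaleR_right, simp)
  then show ?thesis by (simp add: zero_le_mult_iff)
qed

lemma lambda_max_rayleigh: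
  fixes M :: "real^'n^'n"
  assumes "sym_mat M"
  shows "lambda_max M \<in> eigenvalues M" and "x \<bullet> (M *v x) \<le> lambda_max M * (x \<bullet> x)"
proof -
  have nontrivial: "(UNIV :: (real^'n) set) \<noteq> {0}" using axis_eq_0_iff[of undefined "1::real"] by blast
  obtain m v where "v \<noteq> 0" and eigen: "- M *v v = m *\<^sub>R v"
    and bound: "\<And>y. m * (y \<bullet> y) \<le> y \<bullet> (- M *v y)"
    using rayleigh_min_eigenpair[OF sym_mat_uminus[OF assms] subspace_UNIV UNIV_I nontrivial] by (metis UNIV_I)
  moreover have "M *v v = (- m) *\<^sub>R v"
    using eigen by (metis uminus_matrix_vector_mult minus_minus scaleR_minus_left)
  ultimately have "- m \<in> eigenvalues M" by (auto simp: mem_eigenvalues)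
  have fin: "finite (eigenvalues M)" using assms by (rule finite_eigenvalues)
  with \<open>- m \<in> eigenvalues M\<close> have "- m \<le> lambda_max M"
    unfolding lambda_max_def by (rule Max_ge[rotated])
  show "lambda_max M \<in> eigenvalues M"
    unfolding lambda_max_def using fin \<open>- m \<in> eigenvalues M\<close> by (auto intro: Max_in)
  have "x \<bullet> (M *v x) \<le> - m * (x \<bullet> x)"
    using bound[of x] by (simp add: uminus_matrix_vector_mult)
  also have "\<dots> \<le> lambda_max M * (x \<bullet> x)"
    using \<open>- m \<le> lambda_max M\<close> by (intro mult_right_mono) auto
  finally show "x \<bullet> (M *v x) \<le> lambda_max M * (x \<bullet> x)" .
qed

lemma lambda_min_rayleigh:
  fixes M :: "real^'n^'n"
  assumes "sym_mat M" and "M \<noteq> 0"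
  shows "lambda_min M \<in> eigenvalues M - {0}"
    and "y \<in> range ((*v) M) \<Longrightarrow> lambda_min M * (y \<bullet> y) \<le> y \<bullet> (M *v y)"
proof -
  let ?R = "range ((*v) M)"
  obtain w where "M *v w \<noteq> 0" using assms(2) matrix_eq[of M 0] by auto
  then have nontrivial: "?R \<noteq> {0}" by blast
  obtain x m where "x \<in> ?R" and "x \<noteq> 0" and eigen: "M *v x = m *\<^sub>R x"
    and bound: "\<And>y. y \<in> ?R \<Longrightarrow> m * (y \<bullet> y) \<le> y \<bullet> (M *v y)"
    by (rule rayleigh_min_eigenpair[OF assms(1) subspace_range_matrix rangeI nontrivial]) blast
  have "m \<noteq> 0"
  proof
    assume "m = 0"
    obtain z where "x = M *v z" using \<open>x \<in> ?R\<close> by blast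
    then have "x \<bullet> x = z \<bullet> (M *v x)" by (simp add: sym_mat_inner[OF assms(1)])
    with \<open>m = 0\<close> eigen \<open>x \<noteq> 0\<close> show False by simp
  qed
  with \<open>x \<noteq> 0\<close> eigen have m: "m \<in> eigenvalues M - {0}" by (auto simp: mem_eigenvalues)
  have fin: "finite (eigenvalues M - {0})" using finite_eigenvalues[OF assms(1)] by simp
  moreover from m have "eigenvalues M - {0} \<noteq> {}" by blast
  ultimately show "lambda_min M \<in> eigenvalues M - {0}"
    unfolding lambda_min_def by (rule Min_in)
  from fin m have "lambda_min M \<le> m" unfolding lambda_min_def by (rule Min_le)
  then have "lambda_min M * (y \<bullet> y) \<le> m * (y \<bullet> y)" by (intro mult_right_mono) auto
  also assume "y \<in> ?R"
  then have "m * (y \<bullet> y) \<le> y \<bullet> (M *v y)" by (rule bound)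
  finally show "lambda_min M * (y \<bullet> y) \<le> y \<bullet> (M *v y)" .
qed

lemma lambda_max_mono:
  fixes E D :: "real^'n^'n"
  assumes "sym_mat E" and "sym_mat D" and "loewner_le E D"
  shows "lambda_max E \<le> lambda_max D"
proof -
  obtain v where "v \<noteq> 0" and "E *v v = lambda_max E *\<^sub>R v"
    using lambda_max_rayleigh(1)[OF assms(1)] by (auto simp: mem_eigenvalues)
  then have "lambda_max E * (v \<bullet> v) = v \<bullet> (E *v v)" by simp
  also have "\<dots> \<le> v \<bullet> (D *v v)"
    using assms(3) unfolding loewner_le_def pos_semidef_def
    by (simp add: matrix_vector_mult_diff_rdistrib inner_diff_right)
  also have "\<dots> \<le> lambda_max D * (v \<bullet> v)" by (rule lambda_max_rayleigh(2)[OF assms(2)])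
  finally show ?thesis using \<open>v \<noteq> 0\<close> by simp
qed

lemma sym_mat_range_projection:
  fixes D :: "real^'n^'n"
  assumes "sym_mat D"
  obtains y where "y \<in> range ((*v) D)" and "D *v y = D *v x"
    and "\<And>w. w \<in> range ((*v) D) \<Longrightarrow> y \<bullet> w = x \<bullet> w"
proof -
  let ?R = "range ((*v) D)"
  have "span ?R = ?R" using subspace_range_matrix by (rule span_eq_iff[THEN iffD2])
  then obtain y z where "y \<in> ?R" and orth: "\<And>w. w \<in> ?R \<Longrightarrow> z \<bullet> w = 0" and "x = y + z"
    using orthogonal_subspace_decomp_exists[of ?R x] unfolding orthogonal_def by metis
  moreover have "(D *v z) \<bullet> (D *v z) = 0"
    using orth[of "D *v (D *v z)"] sym_mat_inner[OF assms, of z "D *v z"] by simp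
  ultimately show thesis
    using that by (simp add: matrix_vector_right_distrib inner_add_left)
qed

definition rank_one_downdate :: "real^'n^'n \<Rightarrow> real^'n \<Rightarrow> real^'n^'n" where
  "rank_one_downdate D u = D - (1 / (u \<bullet> (D *v u))) *\<^sub>R (D ** outer u u ** D)"

lemma SR1_minus_eq_rank_one_downdate:
  "(G - A) *v u \<noteq> 0 \<Longrightarrow> SR1 A G u - A = rank_one_downdate (G - A) u"
  unfolding SR1_def rank_one_downdate_def by (simp add: algebra_simps)

context
  fixes D :: "real^'n^'n" and u :: "real^'n"
  assumes psd: "pos_semidef D" and curvature: "0 < u \<bullet> (D *v u)"
begin

lemma rank_one_downdate_mult:
  "rank_one_downdate D u *v x = D *v x - ((D *v u) \<bullet> x / (u \<bullet> (D *v u))) *\<^sub>R (D *v u)"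
proof -
  have "(D ** outer u u ** D) *v x = ((D *v u) \<bullet> x) *\<^sub>R (D *v u)"
    using sym_mat_inner[OF pos_semidefD(1)[OF psd], of u x]
    by (simp add: outer_mult matrix_vector_mult_scaleR flip: matrix_vector_mul_assoc)
  then show ?thesis
    unfolding rank_one_downdate_def
    by (simp add: matrix_vector_mult_diff_rdistrib flip: scaleR_matrix_vector_assoc)
qed

lemma rank_one_downdate_quadratic_form:
  "x \<bullet> (rank_one_downdate D u *v x) = x \<bullet> (D *v x) - ((D *v u) \<bullet> x)\<^sup>2 / (u \<bullet> (D *v u))"
  by (simp add: rank_one_downdate_mult inner_diff_right inner_commute power2_eq_square)

lemma pos_semidef_rank_one_downdate: "pos_semidef (rank_one_downdate D u)"
  unfolding pos_semidef_def
proof (intro conjI allI)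
  show "sym_mat (rank_one_downdate D u)"
    using pos_semidefD(1)[OF psd]
    by (simp add: sym_mat_iff_inner rank_one_downdate_mult inner_diff_left inner_diff_right inner_commute)
  fix x
  have "((D *v u) \<bullet> x)\<^sup>2 \<le> (x \<bullet> (D *v x)) * (u \<bullet> (D *v u))"
    using psd_on_subspace_cauchy_schwarz[OF pos_semidefD(1)[OF psd] subspace_UNIV, of x u]
      sym_mat_inner[OF pos_semidefD(1)[OF psd], of u x]
    by (simp add: pos_semidefD(2)[OF psd] inner_commute)
  with curvature show "0 \<le> x \<bullet> (rank_one_downdate D u *v x)"
    by (simp add: rank_one_downdate_quadratic_form divide_le_eq)
qed

lemma loewner_le_rank_one_downdate: "loewner_le (rank_one_downdate D u) D"
  unfolding loewner_le_def pos_semidef_def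
proof (intro conjI allI)
  show "sym_mat (D - rank_one_downdate D u)"
    using pos_semidefD(1)[OF psd] pos_semidefD(1)[OF pos_semidef_rank_one_downdate]
    by (rule sym_mat_diff)
  show "0 \<le> x \<bullet> ((D - rank_one_downdate D u) *v x)" for x
    using curvature
    by (simp add: matrix_vector_mult_diff_rdistrib inner_diff_right rank_one_downdate_quadratic_form)
qed

lemma rank_one_downdate_mult_self: "rank_one_downdate D u *v u = 0"
  using curvature by (simp add: rank_one_downdate_mult inner_commute)

lemma rank_one_downdate_orthogonal: "u \<bullet> (rank_one_downdate D u *v x) = 0"
  using sym_mat_inner[OF pos_semidefD(1)[OF pos_semidef_rank_one_downdate], of u x]
  by (simp add: rank_one_downdate_mult_self)

lemma rank_one_downdate_mult_in_range: "rank_one_downdate D u *v x \<in> range ((*v) D)"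
proof
  show "rank_one_downdate D u *v x = D *v (x - ((D *v u) \<bullet> x / (u \<bullet> (D *v u))) *\<^sub>R u)"
    by (simp add: rank_one_downdate_mult matrix_vector_mult_diff_distrib matrix_vector_mult_scaleR)
qed simp

lemma rank_rank_one_downdate: "rank (rank_one_downdate D u) = rank D - 1"
proof -
  let ?E = "rank_one_downdate D u"
  let ?RE = "range ((*v) ?E)" and ?RD = "range ((*v) D)"
  have "D *v u \<notin> ?RE"
    using curvature rank_one_downdate_orthogonal by (auto simp: inner_commute)
  moreover have "span ?RE = ?RE" using subspace_range_matrix by (rule span_eq_iff[THEN iffD2])
  ultimately have "D *v u \<notin> span ?RE" by metis
  moreover have "span (insert (D *v u) ?RE) = ?RD"
  proof
    show "span (insert (D *v u) ?RE) \<subseteq> ?RD"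
      by (rule span_minimal)
        (auto simp: rank_one_downdate_mult_in_range subspace_range_matrix)
    show "?RD \<subseteq> span (insert (D *v u) ?RE)"
    proof
      fix y assume "y \<in> ?RD"
      then obtain x where "y = D *v x" by blast
      then have "y = ?E *v x + ((D *v u) \<bullet> x / (u \<bullet> (D *v u))) *\<^sub>R (D *v u)"
        by (simp add: rank_one_downdate_mult)
      then show "y \<in> span (insert (D *v u) ?RE)"
        by (metis span_add span_scale span_base insertI1 insertI2 rangeI)
    qed
  qed
  ultimately have "dim ?RD = dim ?RE + 1"
    by (metis dim_insert dim_span)
  then show ?thesis by (simp add: rank_dim_range)
qed

lemma lambda_min_le_rank_one_downdate_form:
  assumes "v \<in> range ((*v) D)" and "u \<bullet> v = 0"
  shows "lambda_min D * (v \<bullet> v) \<le> v \<bullet> (rank_one_downdate D u *v v)"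
proof -
  let ?R = "range ((*v) D)" and ?c = "u \<bullet> (D *v u)" and ?m = "lambda_min D"
  let ?B = "D - ?m *\<^sub>R mat 1"
  have sym: "sym_mat D" using psd by (rule pos_semidefD)
  have "D \<noteq> 0" using curvature by auto
  note min_D = lambda_min_rayleigh[OF sym this]
  obtain u' where "u' \<in> ?R" and "D *v u' = D *v u"
    and u': "\<And>w. w \<in> ?R \<Longrightarrow> u' \<bullet> w = u \<bullet> w"
    using sym_mat_range_projection[OF sym] by blast
  have psd_B: "0 \<le> w \<bullet> (?B *v w)" if "w \<in> ?R" for w
    using min_D(2)[OF that] by (simp add: matrix_vector_mult_shift inner_diff_right)
  have "v \<bullet> (?B *v u') = (D *v u) \<bullet> v"
    using u'[OF assms(1)] assms(2) \<open>D *v u' = D *v u\<close>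
    by (simp add: matrix_vector_mult_shift inner_diff_right inner_commute)
  then have "((D *v u) \<bullet> v)\<^sup>2 = (v \<bullet> (?B *v u'))\<^sup>2" by simp
  also have "\<dots> \<le> (v \<bullet> (?B *v v)) * (u' \<bullet> (?B *v u'))"
    using psd_on_subspace_cauchy_schwarz[OF sym_mat_shift[OF sym] subspace_range_matrix psd_B]
      assms(1) \<open>u' \<in> ?R\<close> by blast
  also have "\<dots> \<le> (v \<bullet> (?B *v v)) * ?c"
  proof (rule mult_left_mono)
    have "0 \<le> ?m" using min_D(1) pos_semidef_eigenvalue_nonneg[OF psd] by blast
    moreover have "u' \<bullet> (D *v u') = ?c"
      using u'[of "D *v u"] \<open>D *v u' = D *v u\<close> by simp
    ultimately show "u' \<bullet> (?B *v u') \<le> ?c" by (simp add: matrix_vector_mult_shift inner_diff_right)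
    show "0 \<le> v \<bullet> (?B *v v)" using psd_B assms(1) .
  qed
  finally have "((D *v u) \<bullet> v)\<^sup>2 / ?c \<le> v \<bullet> (?B *v v)"
    using curvature by (simp add: pos_divide_le_eq)
  then show ?thesis
    by (simp add: rank_one_downdate_quadratic_form matrix_vector_mult_shift inner_diff_right)
qed

lemma lambda_min_le_rank_one_downdate_eigenvalue:
  assumes "\<mu> \<in> eigenvalues (rank_one_downdate D u)" and "\<mu> \<noteq> 0"
  shows "lambda_min D \<le> \<mu>"
proof -
  let ?E = "rank_one_downdate D u"
  obtain v where "v \<noteq> 0" and eigen: "?E *v v = \<mu> *\<^sub>R v"
    using assms(1) by (auto simp: mem_eigenvalues)
  then have "v = ?E *v ((1 / \<mu>) *\<^sub>R v)"
    using \<open>\<mu> \<noteq> 0\<close> by (simp add: matrix_vector_mult_scaleR)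
  then have "v \<in> range ((*v) D)" by (metis rank_one_downdate_mult_in_range)
  moreover have "u \<bullet> v = 0"
    using rank_one_downdate_orthogonal[of v] eigen \<open>\<mu> \<noteq> 0\<close> by simp
  ultimately have "lambda_min D * (v \<bullet> v) \<le> v \<bullet> (?E *v v)"
    by (rule lambda_min_le_rank_one_downdate_form)
  with eigen \<open>v \<noteq> 0\<close> show ?thesis by simp
qed

lemma kappa_rank_one_downdate_le:
  assumes "rank_one_downdate D u \<noteq> 0"
  shows "kappa (rank_one_downdate D u) \<le> kappa D"
proof -
  let ?E = "rank_one_downdate D u"
  have psd_E: "pos_semidef ?E" by (rule pos_semidef_rank_one_downdate)
  have sym: "sym_mat D" and sym_E: "sym_mat ?E"
    using psd psd_E by (simp_all add: pos_semidefD)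
  have "D \<noteq> 0" using curvature by auto
  have "0 \<le> lambda_max D"
    using pos_semidef_eigenvalue_nonneg[OF psd lambda_max_rayleigh(1)[OF sym]] .
  moreover have "lambda_max ?E \<le> lambda_max D"
    using sym_E sym loewner_le_rank_one_downdate by (rule lambda_max_mono)
  moreover have "0 < lambda_min D"
    using lambda_min_rayleigh(1)[OF sym \<open>D \<noteq> 0\<close>] pos_semidef_eigenvalue_nonneg[OF psd]
    by force
  moreover have "lambda_min D \<le> lambda_min ?E"
    using lambda_min_rayleigh(1)[OF sym_E assms]
    by (auto intro: lambda_min_le_rank_one_downdate_eigenvalue)
  ultimately show ?thesis unfolding kappa_def by (rule frac_le)
qed

end

theorem lemma3:
  fixes A G :: "real^'n^'n" and u :: "real^'n"
  assumes "pos_def A" and "pos_def G" and "loewner_le A G"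
    and "u \<bullet> ((G - A) *v u) > 0"
  shows "rank (SR1 A G u - A) = rank (G - A) - 1
     \<and> (SR1 A G u - A \<noteq> 0 \<longrightarrow> kappa (SR1 A G u - A) \<le> kappa (G - A))"
proof -
  have psd: "pos_semidef (G - A)" using \<open>loewner_le A G\<close> unfolding loewner_le_def .
  have curvature: "0 < u \<bullet> ((G - A) *v u)" using assms(4) .
  then have "(G - A) *v u \<noteq> 0" by auto
  then have "SR1 A G u - A = rank_one_downdate (G - A) u"
    by (rule SR1_minus_eq_rank_one_downdate)
  then show ?thesis
    using rank_rank_one_downdate[OF psd curvature] kappa_rank_one_downdate_le[OF psd curvature]
    by simp
qed

end
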